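(* Let $a<b$ and let $f:[a,b]\rightarrow\mathbb{R}$ be a twice continuously differentiable mapping in $(a,b)$ with $f''\in L^2[a,b]$. Then \[ \left|f\left(\frac{a+b}{2}\right)-\frac{1}{b-a}\int_{a}^{b}f(t)\,dt\right|\leq \frac{(b-a)^{3/2}}{2\sqrt{3}\pi}\|f''\|_2. \]
   Context: $\|g\|_2=\left(\int_a^b g(t)^2\,dt\right)^{1/2}$. *)

theory Defs
  imports "HOL-Analysis.Analysis"
begin

definition L2_norm :: "real \<Rightarrow> real \<Rightarrow> (real \<Rightarrow> real) \<Rightarrow> real" where
  "L2_norm a b g = sqrt (integral {a..b} (\<lambda>t. (g t)^2))"

end

theory Submission
  imports Defs
begin

text \<open>
  Let \<open>m\<close> be the midpoint, \<open>h = (b - a) / 2\<close> and \<open>N = L2_norm a b f''\<close>. By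
  Cauchy-Schwarz, \<open>\<bar>f' d - f' c\<bar> \<le> N * sqrt (d - c)\<close>, i.e. \<open>f'\<close> is Hoelder of exponent 1/2.
  The symmetric second difference \<open>f (m + t) + f (m - t) - 2 * f m\<close> then has derivative
  bounded by \<open>N * sqrt (2 * t)\<close>, so it is bounded by \<open>2 * sqrt 2 / 3 * N * t powr (3/2)\<close>;
  and it is itself the derivative of \<open>integral {m - t..m + t} f - 2 * t * f m\<close>. Integrating
  twice in this way bounds the midpoint error by \<open>N * (b - a) powr (3/2) / 15\<close>, which is
  better than the claimed bound because \<open>2 * sqrt 3 * pi < 15\<close>.
\<close>

lemma abs_diff_le_of_abs_deriv_le:
  fixes \<phi> \<phi>' \<psi> \<psi>' :: "real \<Rightarrow> real"
  assumes "c \<le> d" and "continuous_on {c..d} \<phi>" and "continuous_on {c..d} \<psi>"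
    and "\<And>x. c < x \<Longrightarrow> x < d \<Longrightarrow> (\<phi> has_real_derivative \<phi>' x) (at x)"
    and "\<And>x. c < x \<Longrightarrow> x < d \<Longrightarrow> (\<psi> has_real_derivative \<psi>' x) (at x)"
    and "\<And>x. c < x \<Longrightarrow> x < d \<Longrightarrow> \<bar>\<phi>' x\<bar> \<le> \<psi>' x"
  shows "\<bar>\<phi> d - \<phi> c\<bar> \<le> \<psi> d - \<psi> c"
proof -
  have "(\<lambda>x. \<psi> x + s * \<phi> x) c \<le> (\<lambda>x. \<psi> x + s * \<phi> x) d" if "\<bar>s\<bar> = 1" for s
  proof (rule DERIV_nonneg_imp_increasing_open[OF \<open>c \<le> d\<close>])
    fix x assume "c < x" "x < d"
    moreover have "\<bar>s * \<phi>' x\<bar> \<le> \<psi>' x"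
      using assms(6)[OF \<open>c < x\<close> \<open>x < d\<close>] that by (simp add: abs_mult)
    ultimately show "\<exists>y. ((\<lambda>x. \<psi> x + s * \<phi> x) has_real_derivative y) (at x) \<and> 0 \<le> y"
      using assms(4,5) by (intro exI[of _ "\<psi>' x + s * \<phi>' x"]) (auto intro!: derivative_eq_intros)
  qed (intro continuous_intros assms(2,3))
  from this[of 1] this[of "-1"] show ?thesis by simp
qed

lemma abs_diff_le_powr_of_abs_deriv_le:
  fixes \<phi> \<phi>' :: "real \<Rightarrow> real"
  assumes "0 \<le> X" and "0 \<le> p" and "continuous_on {0..X} \<phi>"
    and "\<And>x. 0 < x \<Longrightarrow> x < X \<Longrightarrow> (\<phi> has_real_derivative \<phi>' x) (at x)"
    and "\<And>x. 0 < x \<Longrightarrow> x < X \<Longrightarrow> \<bar>\<phi>' x\<bar> \<le> C * x powr p"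
  shows "\<bar>\<phi> X - \<phi> 0\<bar> \<le> C / (p + 1) * X powr (p + 1)"
proof -
  have "\<bar>\<phi> X - \<phi> 0\<bar> \<le> C / (p + 1) * X powr (p + 1) - C / (p + 1) * 0 powr (p + 1)"
  proof (rule abs_diff_le_of_abs_deriv_le[where \<psi>'="\<lambda>x. C * x powr p"])
    show "continuous_on {0..X} (\<lambda>x. C / (p + 1) * x powr (p + 1))"
      using assms(2) by (intro continuous_intros continuous_on_powr') auto
    fix x :: real assume "0 < x"
    have "((\<lambda>x. C / (p + 1) * x powr (p + 1)) has_real_derivative C / (p + 1) * ((p + 1) * x powr p)) (at x)"
      using has_real_derivative_powr[OF \<open>0 < x\<close>, of "p + 1"] by (intro DERIV_cmult) simp
    then show "((\<lambda>x. C / (p + 1) * x powr (p + 1)) has_real_derivative C * x powr p) (at x)"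
      using assms(2) by simp
  qed (use assms in auto)
  then show ?thesis by simp
qed

lemma integral_square_le:
  fixes g :: "real \<Rightarrow> real"
  assumes "c \<le> d" and "continuous_on {c..d} g"
  shows "(integral {c..d} g)^2 \<le> (d - c) * integral {c..d} (\<lambda>t. (g t)^2)"
proof (cases "c = d")
  case False
  define I where "I = integral {c..d} g"
  define J where "J = integral {c..d} (\<lambda>t. (g t)^2)"
  define \<mu> where "\<mu> = I / (d - c)"
  have len: "d - c > 0" using assms(1) False by simp
  have "(g has_integral I) {c..d}"
    unfolding I_def using integrable_continuous_real[OF assms(2)] by blast
  moreover have "((\<lambda>t. (g t)^2) has_integral J) {c..d}"
    unfolding J_def using assms(2) by (intro integrable_integral integrable_continuous_real continuous_intros)
  moreover have "((\<lambda>t. \<mu>^2) has_integral (d - c) * \<mu>^2) {c..d}"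
    using has_integral_const_real[of "\<mu>^2" c d] assms(1) by simp
  ultimately have "((\<lambda>t. (g t)^2 - 2 * \<mu> * g t + \<mu>^2) has_integral J - 2 * \<mu> * I + (d - c) * \<mu>^2) {c..d}"
    by (intro has_integral_add has_integral_diff has_integral_mult_right)
  moreover have "(g t)^2 - 2 * \<mu> * g t + \<mu>^2 = (g t - \<mu>)^2" for t
    by (simp add: power2_eq_square algebra_simps)
  moreover have I_eq: "I = (d - c) * \<mu>"
    using len by (simp add: \<mu>_def)
  then have "J - 2 * \<mu> * I + (d - c) * \<mu>^2 = J - (d - c) * \<mu>^2"
    unfolding I_eq by (simp add: power2_eq_square algebra_simps)
  ultimately have "((\<lambda>t. (g t - \<mu>)^2) has_integral J - (d - c) * \<mu>^2) {c..d}"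
    by simp
  then have "0 \<le> J - (d - c) * \<mu>^2"
    by (rule has_integral_nonneg) simp
  then have "(d - c) * ((d - c) * \<mu>^2) \<le> (d - c) * J"
    using len by (intro mult_left_mono) auto
  moreover have "I^2 = (d - c) * ((d - c) * \<mu>^2)"
    unfolding I_eq by (simp add: power_mult_distrib power2_eq_square)
  ultimately show ?thesis
    by (simp add: I_def J_def)
qed simp

lemma abs_diff_le_sqrt_mul_L2_norm:
  fixes g g' :: "real \<Rightarrow> real"
  assumes deriv: "\<And>x. x \<in> {a<..<b} \<Longrightarrow> (g has_real_derivative g' x) (at x)"
    and cont: "continuous_on {a<..<b} g'"
    and square_int: "(\<lambda>t. (g' t)^2) integrable_on {a..b}"
    and "a < c" "c \<le> d" "d < b"
  shows "\<bar>g d - g c\<bar> \<le> sqrt (d - c) * L2_norm a b g'"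
proof -
  have sub: "{c..d} \<subseteq> {a<..<b}" "{c..d} \<subseteq> {a..b}"
    using assms(4-6) by auto
  have "(g' has_integral (g d - g c)) {c..d}"
    using \<open>c \<le> d\<close>
    by (intro fundamental_theorem_of_calculus)
       (use sub(1) in \<open>auto simp: has_real_derivative_iff_has_vector_derivative[symmetric]
          intro!: has_field_derivative_at_within deriv\<close>)
  then have "(g d - g c)^2 \<le> (d - c) * integral {c..d} (\<lambda>t. (g' t)^2)"
    using integral_square_le[OF \<open>c \<le> d\<close> continuous_on_subset[OF cont sub(1)]]
    by (simp add: integral_unique)
  also have "\<dots> \<le> (d - c) * integral {a..b} (\<lambda>t. (g' t)^2)"
    using \<open>c \<le> d\<close> sub(2) square_int integrable_on_subinterval[OF square_int sub(2)]
    by (intro mult_left_mono integral_subset_le) auto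
  finally have "sqrt ((g d - g c)^2) \<le> sqrt ((d - c) * integral {a..b} (\<lambda>t. (g' t)^2))"
    by (rule real_sqrt_le_mono)
  then show ?thesis
    by (simp add: L2_norm_def real_sqrt_mult)
qed

lemma integrable_on_if_bounded_derivative:
  fixes f f' :: "real \<Rightarrow> real"
  assumes deriv: "\<And>x. x \<in> {a<..<b} \<Longrightarrow> (f has_real_derivative f' x) (at x)"
    and bound: "\<And>x. x \<in> {a<..<b} \<Longrightarrow> \<bar>f' x\<bar> \<le> M"
  shows "f integrable_on {a..b}"
proof (cases "a < b")
  case True
  define m where "m = (a + b) / 2"
  have m: "m \<in> {a<..<b}"
    using True by (simp add: m_def)
  have f_bound: "\<bar>f x\<bar> \<le> \<bar>f m\<bar> + M * (b - a)" if x: "x \<in> {a<..<b}" for x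
  proof -
    have "\<bar>f x - f m\<bar> \<le> M * \<bar>x - m\<bar>"
      using field_differentiable_bound[of "{a<..<b}" f f' M x m] deriv bound x m
      by (auto intro: has_field_derivative_at_within)
    also have "\<dots> \<le> M * (b - a)"
      using x m order_trans[OF abs_ge_zero bound[OF x]] by (intro mult_left_mono) auto
    finally show ?thesis by linarith
  qed
  have "continuous_on {a<..<b} f"
    using deriv by (meson DERIV_isCont continuous_at_imp_continuous_on)
  then have "f \<in> borel_measurable (lebesgue_on {a<..<b})"
    by (rule continuous_imp_measurable_on_sets_lebesgue) simp
  moreover have "(\<lambda>_. \<bar>f m\<bar> + M * (b - a)) integrable_on {a<..<b}"
    using integrable_on_open_interval_real by blast
  ultimately have "f integrable_on {a<..<b}"
    using f_bound by (rule measurable_bounded_by_integrable_imp_integrable_real) auto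
  then show ?thesis
    by (simp add: integrable_on_open_interval_real)
qed (simp flip: integrable_on_open_interval_real add: integrable_on_empty)

lemma symmetric_difference_le_of_holder_derivative:
  fixes f f' :: "real \<Rightarrow> real"
  assumes deriv: "\<And>x. x \<in> {a<..<b} \<Longrightarrow> (f has_real_derivative f' x) (at x)"
    and holder: "\<And>c d. a < c \<Longrightarrow> c \<le> d \<Longrightarrow> d < b \<Longrightarrow> \<bar>f' d - f' c\<bar> \<le> L * sqrt (d - c)"
    and "0 \<le> x" "a < m - x" "m + x < b"
  shows "\<bar>f (m + x) + f (m - x) - 2 * f m\<bar> \<le> 2 * sqrt 2 / 3 * L * x powr (3/2)"
proof -
  have inside: "m + t \<in> {a<..<b}" "m - t \<in> {a<..<b}" if "0 \<le> t" "t \<le> x" for t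
    using that assms(3-5) by auto
  have has_deriv: "((\<lambda>t. f (m + t) + f (m - t)) has_real_derivative f' (m + t) - f' (m - t)) (at t)"
    if "0 \<le> t" "t \<le> x" for t
    using deriv[OF inside(1)[OF that]] deriv[OF inside(2)[OF that]]
    by (auto intro!: derivative_eq_intros DERIV_chain2[where f=f])
  have "\<bar>(f (m + x) + f (m - x)) - (f (m + 0) + f (m - 0))\<bar>
      \<le> sqrt 2 * L / (1/2 + 1) * x powr (1/2 + 1)"
  proof (rule abs_diff_le_powr_of_abs_deriv_le[where \<phi>="\<lambda>t. f (m + t) + f (m - t)"])
    show "continuous_on {0..x} (\<lambda>t. f (m + t) + f (m - t))"
      using has_deriv by (meson DERIV_isCont atLeastAtMost_iff continuous_at_imp_continuous_on)
    fix t assume t: "0 < t" "t < x"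
    show "((\<lambda>t. f (m + t) + f (m - t)) has_real_derivative f' (m + t) - f' (m - t)) (at t)"
      using t by (intro has_deriv) auto
    have "\<bar>f' (m + t) - f' (m - t)\<bar> \<le> L * sqrt ((m + t) - (m - t))"
      using t assms(4,5) by (intro holder) auto
    also have "\<dots> = sqrt 2 * L * t powr (1/2)"
      using t by (simp add: real_sqrt_mult powr_half_sqrt)
    finally show "\<bar>f' (m + t) - f' (m - t)\<bar> \<le> sqrt 2 * L * t powr (1/2)" .
  qed (use assms in auto)
  then show ?thesis
    by simp
qed

lemma midpoint_error_le_of_holder_derivative:
  fixes f f' :: "real \<Rightarrow> real"
  assumes "a < b"
    and deriv: "\<And>x. x \<in> {a<..<b} \<Longrightarrow> (f has_real_derivative f' x) (at x)"
    and holder: "\<And>c d. a < c \<Longrightarrow> c \<le> d \<Longrightarrow> d < b \<Longrightarrow> \<bar>f' d - f' c\<bar> \<le> L * sqrt (d - c)"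
  shows "\<bar>f ((a + b) / 2) - 1 / (b - a) * integral {a..b} f\<bar> \<le> L * (b - a) powr (3/2) / 15"
proof -
  define m where "m = (a + b) / 2"
  define h where "h = (b - a) / 2"
  define F where "F y = integral {a..y} f" for y
  have h: "0 < h" "a = m - h" "b = m + h"
    using \<open>a < b\<close> by (simp_all add: m_def h_def field_simps)
  have length: "b - a = 2 * h"
    by (simp add: h_def)
  \<comment> \<open>\<open>f\<close> need not be continuous at \<open>a\<close> and \<open>b\<close>; it is integrable because \<open>f'\<close> is bounded.\<close>
  have "\<bar>f' x\<bar> \<le> \<bar>f' m\<bar> + \<bar>L\<bar> * sqrt (b - a)" if "x \<in> {a<..<b}" for x
  proof -
    have "\<bar>f' x - f' m\<bar> \<le> \<bar>L\<bar> * sqrt \<bar>x - m\<bar>"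
      using holder[of m x] holder[of x m] that h
      by (cases "m \<le> x") (auto simp: abs_minus_commute intro: order_trans[OF _ mult_right_mono])
    also have "\<dots> \<le> \<bar>L\<bar> * sqrt (b - a)"
      using that h by (intro mult_left_mono real_sqrt_le_mono) auto
    finally show ?thesis by linarith
  qed
  then have f_int: "f integrable_on {a..b}"
    using deriv by (rule integrable_on_if_bounded_derivative[rotated])
  have F_deriv: "(F has_real_derivative f y) (at y)" if "y \<in> {a<..<b}" for y
  proof -
    have "continuous (at y within {a..b}) f"
      using DERIV_isCont[OF deriv[OF that]] by (rule continuous_at_imp_continuous_at_within)
    then have "(F has_vector_derivative f y) (at y within {a..b})"
      using integral_has_vector_derivative_continuous_at[OF f_int, of y "{}"] that
      unfolding F_def[abs_def] by auto
    moreover have "at y within {a..b} = at y"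
      using that by (intro at_within_interior) auto
    ultimately show ?thesis
      by (simp add: has_real_derivative_iff_has_vector_derivative)
  qed
  have "\<bar>(F (m + h) - F (m - h) - 2 * h * f m) - (F (m + 0) - F (m - 0) - 2 * 0 * f m)\<bar>
      \<le> 2 * sqrt 2 / 3 * L / (3/2 + 1) * h powr (3/2 + 1)"
  proof (rule abs_diff_le_powr_of_abs_deriv_le[where \<phi>="\<lambda>t. F (m + t) - F (m - t) - 2 * t * f m"])
    have F_cont: "continuous_on {a..b} F"
      unfolding F_def[abs_def] by (rule indefinite_integral_continuous_1[OF f_int])
    have "continuous_on {0..h} (\<lambda>t. F (m + t))" "continuous_on {0..h} (\<lambda>t. F (m - t))"
      by (rule continuous_on_compose2[OF F_cont], use h in \<open>auto intro!: continuous_intros\<close>)+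
    then show "continuous_on {0..h} (\<lambda>t. F (m + t) - F (m - t) - 2 * t * f m)"
      by (intro continuous_intros)
    fix t assume t: "0 < t" "t < h"
    then show "((\<lambda>t. F (m + t) - F (m - t) - 2 * t * f m) has_real_derivative
        f (m + t) + f (m - t) - 2 * f m) (at t)"
      using F_deriv[of "m + t"] F_deriv[of "m - t"] h
      by (auto intro!: derivative_eq_intros DERIV_chain2[where f=F])
    show "\<bar>f (m + t) + f (m - t) - 2 * f m\<bar> \<le> 2 * sqrt 2 / 3 * L * t powr (3/2)"
      using t h by (intro symmetric_difference_le_of_holder_derivative[OF deriv holder]) auto
  qed (use h in auto)
  moreover have "F (m + h) - F (m - h) = integral {a..b} f"
    using h by (simp add: F_def)
  moreover have "h powr (3/2 + 1) = h * h powr (3/2)"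
    using h powr_add[of h 1 "3/2"] by simp
  ultimately have bound: "\<bar>integral {a..b} f - 2 * h * f m\<bar> \<le> 4 * sqrt 2 / 15 * L * h * h powr (3/2)"
    by simp
  have "(2::real) powr (3/2) = 2 * sqrt 2"
    using powr_add[of "2::real" 1 "1/2"] by (simp add: powr_half_sqrt)
  then have length_powr: "(b - a) powr (3/2) = 2 * sqrt 2 * h powr (3/2)"
    unfolding length using h(1) by (simp add: powr_mult)
  have "f m - 1 / (b - a) * integral {a..b} f = - ((integral {a..b} f - 2 * h * f m) / (2 * h))"
    using h(1) by (simp add: length field_simps)
  then have "\<bar>f m - 1 / (b - a) * integral {a..b} f\<bar> = \<bar>integral {a..b} f - 2 * h * f m\<bar> / (2 * h)"
    using h(1) by simp
  also have "\<dots> \<le> 4 * sqrt 2 / 15 * L * h * h powr (3/2) / (2 * h)"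
    using bound h(1) by (intro divide_right_mono) auto
  also have "\<dots> = L * (b - a) powr (3/2) / 15"
    using h(1) by (simp add: length_powr field_simps)
  finally show ?thesis
    unfolding m_def .
qed

theorem corollary2p7:
  fixes f f' f'' :: "real \<Rightarrow> real" and a b :: real
  assumes "a < b"
    and "\<And>x. x \<in> {a<..<b} \<Longrightarrow> (f has_real_derivative f' x) (at x)"
    and "\<And>x. x \<in> {a<..<b} \<Longrightarrow> (f' has_real_derivative f'' x) (at x)"
    and "continuous_on {a<..<b} f''"
    and "(\<lambda>t. (f'' t)^2) integrable_on {a..b}"
  shows "\<bar>f ((a + b) / 2) - (1 / (b - a)) * integral {a..b} f\<bar>
           \<le> (b - a) powr (3/2) / (2 * sqrt 3 * pi) * L2_norm a b f''"
proof -
  have holder: "\<bar>f' d - f' c\<bar> \<le> L2_norm a b f'' * sqrt (d - c)" if "a < c" "c \<le> d" "d < b" for c d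
    using abs_diff_le_sqrt_mul_L2_norm[OF assms(3-5) that] by (simp add: mult.commute)
  have "\<bar>f ((a + b) / 2) - (1 / (b - a)) * integral {a..b} f\<bar>
      \<le> L2_norm a b f'' * (b - a) powr (3/2) / 15"
    by (rule midpoint_error_le_of_holder_derivative[OF assms(1,2) holder])
  also have "\<dots> \<le> (b - a) powr (3/2) / (2 * sqrt 3 * pi) * L2_norm a b f''"
  proof -
    have "sqrt 3 \<le> 7/4"
      by (rule real_le_lsqrt) (auto simp: power2_eq_square)
    then have "2 * sqrt 3 * pi \<le> 15"
      using pi_less_4 mult_mono[of "sqrt 3" "7/4" pi 4] by simp
    moreover have "0 \<le> L2_norm a b f'' * (b - a) powr (3/2)"
      using integral_nonneg[OF assms(5)] by (simp add: L2_norm_def)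
    ultimately have "L2_norm a b f'' * (b - a) powr (3/2) / 15
        \<le> L2_norm a b f'' * (b - a) powr (3/2) / (2 * sqrt 3 * pi)"
      by (intro divide_left_mono) auto
    then show ?thesis
      by (simp add: ac_simps)
  qed
  finally show ?thesis .
qed

end
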